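(* Let $H$ be an nb-critical graph, $vw\in E(H)$, and $H'=H-vw$. Suppose vertices $s,t$ of a graph $J$ are linked in $J$ via $H$, i.e. $J$ contains a subgraph isomorphic to $H'$ under an isomorphism mapping $v\mapsto s$ and $w\mapsto t$. Then for every near-bipartite coloring $I,F$ of $J$, either $\{s,t\}\subseteq I$, or $\{s,t\}\subseteq F$ and $J[F]$ contains a path from $s$ to $t$.
   Context: A near-bipartite coloring (nb-coloring) of a (multi)graph is a partition of its vertex set into $I,F$ with $I$ independent and the subgraph induced by $F$ a forest (no circuits). A graph is nb-critical if it has no nb-coloring but every proper subgraph has one. *)

theory Defs
  imports Main
begin

text \<open>A (finite) multigraph with vertex set V, edge set E and an endpoint map
  ends; each edge has one (loop) or two endpoints. Parallel edges and loops allowed.\<close>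
definition multigraph :: "'v set \<Rightarrow> 'e set \<Rightarrow> ('e \<Rightarrow> 'v set) \<Rightarrow> bool" where
  "multigraph V E ends \<longleftrightarrow> finite V \<and> finite E \<and>
     (\<forall>e\<in>E. ends e \<subseteq> V \<and> ends e \<noteq> {} \<and> card (ends e) \<le> 2)"

definition induced_edges :: "'e set \<Rightarrow> ('e \<Rightarrow> 'v set) \<Rightarrow> 'v set \<Rightarrow> 'e set" where
  "induced_edges E ends S = {e \<in> E. ends e \<subseteq> S}"

text \<open>A circuit: distinct edges es_0..es_(k-1), k \<ge> 1, and distinct vertices
  xs_0..xs_(k-1) with es_i joining xs_i and xs_(i+1 mod k).
  (Loops are circuits of length 1, pairs of parallel edges circuits of length 2.)\<close>
definition has_circuit :: "'e set \<Rightarrow> ('e \<Rightarrow> 'v set) \<Rightarrow> bool" where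
  "has_circuit E ends \<longleftrightarrow> (\<exists>es xs. es \<noteq> [] \<and> distinct es \<and> set es \<subseteq> E \<and>
      length xs = length es \<and> distinct xs \<and>
      (\<forall>i < length es. ends (es ! i) = {xs ! i, xs ! ((i + 1) mod length es)}))"

definition nb_coloring :: "'v set \<Rightarrow> 'e set \<Rightarrow> ('e \<Rightarrow> 'v set) \<Rightarrow> 'v set \<Rightarrow> 'v set \<Rightarrow> bool" where
  "nb_coloring V E ends I F \<longleftrightarrow> I \<union> F = V \<and> I \<inter> F = {} \<and>
     (\<forall>e\<in>E. \<not> ends e \<subseteq> I) \<and>
     \<not> has_circuit (induced_edges E ends F) ends"

definition nb_colorable :: "'v set \<Rightarrow> 'e set \<Rightarrow> ('e \<Rightarrow> 'v set) \<Rightarrow> bool" where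
  "nb_colorable V E ends \<longleftrightarrow> (\<exists>I F. nb_coloring V E ends I F)"

definition subgraph :: "'v set \<Rightarrow> 'e set \<Rightarrow> 'v set \<Rightarrow> 'e set \<Rightarrow> ('e \<Rightarrow> 'v set) \<Rightarrow> bool" where
  "subgraph V' E' V E ends \<longleftrightarrow> V' \<subseteq> V \<and> E' \<subseteq> E \<and> (\<forall>e\<in>E'. ends e \<subseteq> V')"

definition nb_critical :: "'v set \<Rightarrow> 'e set \<Rightarrow> ('e \<Rightarrow> 'v set) \<Rightarrow> bool" where
  "nb_critical V E ends \<longleftrightarrow> multigraph V E ends \<and> \<not> nb_colorable V E ends \<and>
     (\<forall>V' E'. subgraph V' E' V E ends \<and> (V', E') \<noteq> (V, E) \<longrightarrow> nb_colorable V' E' ends)"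

definition has_path_in :: "'e set \<Rightarrow> ('e \<Rightarrow> 'v set) \<Rightarrow> 'v set \<Rightarrow> 'v \<Rightarrow> 'v \<Rightarrow> bool" where
  "has_path_in E ends S s t \<longleftrightarrow> (\<exists>xs. xs \<noteq> [] \<and> hd xs = s \<and> last xs = t \<and> distinct xs \<and>
      set xs \<subseteq> S \<and>
      (\<forall>i. Suc i < length xs \<longrightarrow>
          (\<exists>e \<in> induced_edges E ends S. ends e = {xs ! i, xs ! Suc i})))"

definition contains_copy ::
  "'v set \<Rightarrow> 'e set \<Rightarrow> ('e \<Rightarrow> 'v set) \<Rightarrow> 'u set \<Rightarrow> 'f set \<Rightarrow> ('f \<Rightarrow> 'u set) \<Rightarrow>
   'v \<Rightarrow> 'v \<Rightarrow> 'u \<Rightarrow> 'u \<Rightarrow> bool" where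
  "contains_copy VH EH endsH VJ EJ endsJ v w s t \<longleftrightarrow>
     (\<exists>\<phi> \<psi>. inj_on \<phi> VH \<and> \<phi> ` VH \<subseteq> VJ \<and> inj_on \<psi> EH \<and> \<psi> ` EH \<subseteq> EJ \<and>
        (\<forall>e\<in>EH. endsJ (\<psi> e) = \<phi> ` endsH e) \<and> \<phi> v = s \<and> \<phi> w = t)"

end

theory Submission
  imports Defs
begin

text \<open>Pull the colouring of J back along the copy of H - vw. This gives an nb-colouring of
  H - vw, which cannot be one of H since H is not nb-colourable. So either both ends of vw
  are in the independent part, whence s, t \<in> I, or putting vw back closes a circuit in the
  forest part; that circuit minus vw is a path from v to w in H - vw, whose image is a path
  from s to t in J[F].\<close>

definition graph_embedding ::
  "'v set \<Rightarrow> 'e set \<Rightarrow> ('e \<Rightarrow> 'v set) \<Rightarrow> 'u set \<Rightarrow> 'f set \<Rightarrow> ('f \<Rightarrow> 'u set) \<Rightarrow>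
   ('v \<Rightarrow> 'u) \<Rightarrow> ('e \<Rightarrow> 'f) \<Rightarrow> bool" where
  "graph_embedding V E ends V' E' ends' \<phi> \<psi> \<longleftrightarrow>
     inj_on \<phi> V \<and> \<phi> ` V \<subseteq> V' \<and> inj_on \<psi> E \<and> \<psi> ` E \<subseteq> E' \<and>
     (\<forall>e\<in>E. ends' (\<psi> e) = \<phi> ` ends e)"

lemma contains_copy_iff_graph_embedding:
  "contains_copy VH EH endsH VJ EJ endsJ v w s t \<longleftrightarrow>
     (\<exists>\<phi> \<psi>. graph_embedding VH EH endsH VJ EJ endsJ \<phi> \<psi> \<and> \<phi> v = s \<and> \<phi> w = t)"
  unfolding contains_copy_def graph_embedding_def by blast

lemma graph_embedding_induced:
  assumes "graph_embedding V E ends V' E' ends' \<phi> \<psi>" "S \<subseteq> V" "\<phi> ` S \<subseteq> S'"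
  shows "graph_embedding S (induced_edges E ends S) ends S' (induced_edges E' ends' S') ends' \<phi> \<psi>"
proof -
  have "\<psi> e \<in> induced_edges E' ends' S'" if "e \<in> induced_edges E ends S" for e
  proof -
    have "ends' (\<psi> e) = \<phi> ` ends e" "ends e \<subseteq> S" "\<psi> e \<in> E'"
      using assms(1) that by (auto simp: graph_embedding_def induced_edges_def)
    then show ?thesis using assms(3) by (auto simp: induced_edges_def)
  qed
  then show ?thesis
    using assms(1,2,3) unfolding graph_embedding_def induced_edges_def
    by (auto intro: inj_on_subset simp: image_subset_iff)
qed

definition is_circuit :: "'e list \<Rightarrow> 'v list \<Rightarrow> ('e \<Rightarrow> 'v set) \<Rightarrow> bool" where
  "is_circuit es xs ends \<longleftrightarrow> es \<noteq> [] \<and> distinct es \<and> length xs = length es \<and> distinct xs \<and>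
     (\<forall>i < length es. ends (es ! i) = {xs ! i, xs ! ((i + 1) mod length es)})"

lemma has_circuit_iff: "has_circuit E ends \<longleftrightarrow> (\<exists>es xs. is_circuit es xs ends \<and> set es \<subseteq> E)"
  unfolding has_circuit_def is_circuit_def by blast

lemma is_circuit_vertices:
  assumes "is_circuit es xs ends"
  shows "set xs \<subseteq> \<Union> (ends ` set es)"
proof
  fix x assume "x \<in> set xs"
  then obtain i where "i < length es" "x = xs ! i"
    using assms by (auto simp: is_circuit_def in_set_conv_nth)
  then show "x \<in> \<Union> (ends ` set es)"
    using assms unfolding is_circuit_def by (auto intro!: bexI[of _ "es ! i"])
qed

lemma is_circuit_map:
  assumes "is_circuit es xs ends" "inj_on \<psi> (set es)" "inj_on \<phi> (set xs)"
    and "\<forall>e\<in>set es. ends' (\<psi> e) = \<phi> ` ends e"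
  shows "is_circuit (map \<psi> es) (map \<phi> xs) ends'"
  using assms unfolding is_circuit_def by (auto simp: distinct_map)

lemma is_circuit_rotate:
  assumes "is_circuit es xs ends"
  shows "is_circuit (rotate k es) (rotate k xs) ends"
proof -
  let ?n = "length es"
  have n: "?n > 0" "length xs = ?n" using assms by (auto simp: is_circuit_def)
  have "ends (rotate k es ! i) = {rotate k xs ! i, rotate k xs ! ((i + 1) mod ?n)}"
    if i: "i < ?n" for i
  proof -
    have "((k + i) mod ?n + 1) mod ?n = (k + (i + 1) mod ?n) mod ?n"
      by (simp add: mod_simps)
    then show ?thesis
      using assms i n by (simp add: nth_rotate is_circuit_def del: rotate_Suc)
  qed
  then show ?thesis using assms by (simp add: is_circuit_def del: rotate_Suc)
qed

lemma has_circuit_image: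
  assumes "graph_embedding V E ends V' E' ends' \<phi> \<psi>" "has_circuit E ends"
    and "\<forall>e\<in>E. ends e \<subseteq> V"
  shows "has_circuit E' ends'"
proof -
  obtain es xs where c: "is_circuit es xs ends" "set es \<subseteq> E"
    using assms(2) by (auto simp: has_circuit_iff)
  have "set xs \<subseteq> V" using is_circuit_vertices[OF c(1)] c(2) assms(3) by blast
  then have "is_circuit (map \<psi> es) (map \<phi> xs) ends'"
    using assms(1) c by (intro is_circuit_map) (auto simp: graph_embedding_def intro: inj_on_subset)
  moreover have "set (map \<psi> es) \<subseteq> E'"
    using assms(1) c(2) unfolding graph_embedding_def by (metis image_mono order_trans set_map)
  ultimately show ?thesis unfolding has_circuit_iff by blast
qed

lemma nb_coloring_pullback:
  assumes emb: "graph_embedding V E ends V' E' ends' \<phi> \<psi>"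
    and col: "nb_coloring V' E' ends' I F"
  shows "nb_coloring V E ends {x\<in>V. \<phi> x \<in> I} {x\<in>V. \<phi> x \<in> F}"
proof -
  let ?F = "{x\<in>V. \<phi> x \<in> F}"
  have "\<not> ends e \<subseteq> {x\<in>V. \<phi> x \<in> I}" if "e \<in> E" for e
  proof
    assume "ends e \<subseteq> {x\<in>V. \<phi> x \<in> I}"
    then have "ends' (\<psi> e) \<subseteq> I" using emb that by (auto simp: graph_embedding_def)
    moreover have "\<psi> e \<in> E'" using emb that by (auto simp: graph_embedding_def)
    ultimately show False using col by (auto simp: nb_coloring_def)
  qed
  moreover have "\<not> has_circuit (induced_edges E ends ?F) ends"
  proof
    have "graph_embedding ?F (induced_edges E ends ?F) ends F (induced_edges E' ends' F) ends' \<phi> \<psi>"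
      by (rule graph_embedding_induced[OF emb]) auto
    moreover assume "has_circuit (induced_edges E ends ?F) ends"
    ultimately have "has_circuit (induced_edges E' ends' F) ends'"
      by (rule has_circuit_image) (auto simp: induced_edges_def)
    then show False using col by (simp add: nb_coloring_def)
  qed
  moreover have "\<phi> ` V \<subseteq> I \<union> F" "I \<inter> F = {}"
    using emb col by (auto simp: graph_embedding_def nb_coloring_def)
  ultimately show ?thesis unfolding nb_coloring_def by blast
qed

lemma has_path_in_endpoints:
  assumes "has_path_in E ends S a b"
  shows "a \<in> S" "b \<in> S"
  using assms unfolding has_path_in_def by (auto dest: hd_in_set last_in_set)

lemma has_path_in_sym:
  assumes "has_path_in E ends S a b"
  shows "has_path_in E ends S b a"
proof -
  obtain xs where xs: "xs \<noteq> []" "hd xs = a" "last xs = b" "distinct xs" "set xs \<subseteq> S"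
    and step: "\<And>i. Suc i < length xs \<Longrightarrow> \<exists>e \<in> induced_edges E ends S. ends e = {xs ! i, xs ! Suc i}"
    using assms unfolding has_path_in_def by blast
  have "\<exists>e \<in> induced_edges E ends S. ends e = {rev xs ! i, rev xs ! Suc i}"
    if i: "Suc i < length xs" for i
  proof -
    let ?j = "length xs - 2 - i"
    have "rev xs ! i = xs ! Suc ?j" "rev xs ! Suc i = xs ! ?j"
      using i by (simp_all add: rev_nth Suc_diff_Suc)
    moreover have "Suc ?j < length xs" using i by simp
    ultimately show ?thesis using step by (metis insert_commute)
  qed
  then show ?thesis unfolding has_path_in_def using xs
    by (intro exI[of _ "rev xs"]) (auto simp: hd_rev last_rev)
qed

lemma has_path_in_image:
  assumes emb: "graph_embedding S (induced_edges E ends S) ends S' (induced_edges E' ends' S') ends' \<phi> \<psi>"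
    and path: "has_path_in E ends S a b"
  shows "has_path_in E' ends' S' (\<phi> a) (\<phi> b)"
proof -
  obtain xs where xs: "xs \<noteq> []" "hd xs = a" "last xs = b" "distinct xs" "set xs \<subseteq> S"
    and step: "\<And>i. Suc i < length xs \<Longrightarrow> \<exists>e \<in> induced_edges E ends S. ends e = {xs ! i, xs ! Suc i}"
    using path unfolding has_path_in_def by blast
  have "\<exists>e' \<in> induced_edges E' ends' S'. ends' e' = {map \<phi> xs ! i, map \<phi> xs ! Suc i}"
    if i: "Suc i < length xs" for i
  proof -
    obtain e where "e \<in> induced_edges E ends S" "ends e = {xs ! i, xs ! Suc i}"
      using step[OF i] by blast
    then show ?thesis using emb i unfolding graph_embedding_def
      by (intro bexI[of _ "\<psi> e"]) auto
  qed
  moreover have "distinct (map \<phi> xs)"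
    using emb xs by (auto simp: graph_embedding_def distinct_map intro: inj_on_subset)
  moreover have "set (map \<phi> xs) \<subseteq> S'"
    using emb xs(5) unfolding graph_embedding_def by auto
  ultimately show ?thesis unfolding has_path_in_def using xs
    by (intro exI[of _ "map \<phi> xs"]) (auto simp: hd_map last_map)
qed

lemma has_path_in_circuit_butlast:
  assumes c: "is_circuit es xs ends" and es: "set es \<subseteq> induced_edges E ends S"
  shows "has_path_in (E - {last es}) ends S (hd xs) (last xs)"
proof -
  let ?n = "length es"
  have n: "es \<noteq> []" "length xs = ?n" "distinct es" "distinct xs"
    using c by (auto simp: is_circuit_def)
  have "set xs \<subseteq> S"
    using is_circuit_vertices[OF c] es by (auto simp: induced_edges_def)
  moreover have "\<exists>e \<in> induced_edges (E - {last es}) ends S. ends e = {xs ! i, xs ! Suc i}"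
    if i: "Suc i < length xs" for i
  proof (intro bexI[of _ "es ! i"])
    show "ends (es ! i) = {xs ! i, xs ! Suc i}" using c i n by (simp add: is_circuit_def)
    have "es ! i \<noteq> es ! (?n - 1)" using i n by (simp add: nth_eq_iff_index_eq)
    then have "es ! i \<noteq> last es" using n by (simp add: last_conv_nth)
    moreover have "es ! i \<in> induced_edges E ends S" using es i n by (auto dest: nth_mem)
    ultimately show "es ! i \<in> induced_edges (E - {last es}) ends S"
      by (auto simp: induced_edges_def)
  qed
  ultimately show ?thesis unfolding has_path_in_def using n
    by (intro exI[of _ xs]) auto
qed

lemma has_path_in_if_circuit_needs_edge:
  assumes circ: "has_circuit (induced_edges E ends S) ends"
    and no_circ: "\<not> has_circuit (induced_edges (E - {e}) ends S) ends"
    and e: "ends e = {a, b}"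
  shows "has_path_in (E - {e}) ends S a b"
proof -
  obtain es xs where c: "is_circuit es xs ends" "set es \<subseteq> induced_edges E ends S"
    using circ by (auto simp: has_circuit_iff)
  have "e \<in> set es"
  proof (rule ccontr)
    assume "e \<notin> set es"
    then have "set es \<subseteq> induced_edges (E - {e}) ends S"
      using c(2) by (auto simp: induced_edges_def)
    then show False using no_circ c(1) by (auto simp: has_circuit_iff)
  qed
  then obtain j where j: "j < length es" "es ! j = e" by (auto simp: in_set_conv_nth)
  \<comment> \<open>rotate the circuit so that e becomes its last edge\<close>
  define es' where "es' = rotate (Suc j) es"
  define xs' where "xs' = rotate (Suc j) xs"
  have c': "is_circuit es' xs' ends" "set es' \<subseteq> induced_edges E ends S"
    using is_circuit_rotate[OF c(1)] c(2) by (simp_all add: es'_def xs'_def del: rotate_Suc)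
  let ?n = "length es"
  have n: "?n > 0" "length es' = ?n" "length xs' = ?n" "es' \<noteq> []" "xs' \<noteq> []"
    using c(1) by (auto simp: is_circuit_def es'_def xs'_def simp del: rotate_Suc)
  have "Suc j + (?n - 1) = j + ?n" using n(1) by simp
  then have "(Suc j + (?n - 1)) mod ?n = j" using j(1) by simp
  then have "last es' = e"
    using j n by (simp add: last_conv_nth es'_def nth_rotate del: rotate_Suc)
  moreover have "ends (last es') = {last xs', hd xs'}"
  proof -
    have "ends (es' ! (?n - 1)) = {xs' ! (?n - 1), xs' ! 0}"
      using c'(1) n by (simp add: is_circuit_def)
    then show ?thesis using n by (simp add: last_conv_nth hd_conv_nth)
  qed
  ultimately have "{a, b} = {hd xs', last xs'}" using e by auto
  then consider "a = hd xs'" "b = last xs'" | "a = last xs'" "b = hd xs'"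
    by (auto simp: doubleton_eq_iff)
  then show ?thesis
    using has_path_in_circuit_butlast[OF c'] \<open>last es' = e\<close> has_path_in_sym by cases auto
qed

theorem lemma3p2:
  fixes VH :: "'v set" and EH :: "'e set" and endsH :: "'e \<Rightarrow> 'v set"
    and VJ :: "'u set" and EJ :: "'f set" and endsJ :: "'f \<Rightarrow> 'u set"
  assumes crit: "nb_critical VH EH endsH"
    and vw: "vw \<in> EH" "endsH vw = {v, w}"
    and J: "multigraph VJ EJ endsJ"
    and linked: "contains_copy VH (EH - {vw}) endsH VJ EJ endsJ v w s t"
    and col: "nb_coloring VJ EJ endsJ I F"
  shows "{s, t} \<subseteq> I \<or> ({s, t} \<subseteq> F \<and> has_path_in EJ endsJ F s t)"
proof -
  obtain \<phi> \<psi> where emb: "graph_embedding VH (EH - {vw}) endsH VJ EJ endsJ \<phi> \<psi>"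
    and st: "\<phi> v = s" "\<phi> w = t"
    using linked by (auto simp: contains_copy_iff_graph_embedding)
  define IH where "IH = {x\<in>VH. \<phi> x \<in> I}"
  define FH where "FH = {x\<in>VH. \<phi> x \<in> F}"
  have colH': "nb_coloring VH (EH - {vw}) endsH IH FH"
    unfolding IH_def FH_def by (rule nb_coloring_pullback[OF emb col])
  \<comment> \<open>of criticality only the non-colourability of H is needed\<close>
  moreover have "\<not> nb_coloring VH EH endsH IH FH"
    using crit by (auto simp: nb_critical_def nb_colorable_def)
  ultimately consider "endsH vw \<subseteq> IH" | "has_circuit (induced_edges EH endsH FH) endsH"
    unfolding nb_coloring_def by blast
  then show ?thesis
  proof cases
    case 1
    then show ?thesis using vw(2) st by (auto simp: IH_def)
  next
    case 2
    then have "has_path_in (EH - {vw}) endsH FH v w"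
      using colH' vw(2) by (intro has_path_in_if_circuit_needs_edge) (auto simp: nb_coloring_def)
    moreover have "graph_embedding FH (induced_edges (EH - {vw}) endsH FH) endsH
        F (induced_edges EJ endsJ F) endsJ \<phi> \<psi>"
      by (rule graph_embedding_induced[OF emb]) (auto simp: FH_def)
    ultimately have "has_path_in EJ endsJ F s t"
      using has_path_in_image st by metis
    then show ?thesis by (simp add: has_path_in_endpoints)
  qed
qed

end
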